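(* Let $s,y\in\mathbb{R}^n$ with $s^Ty>0$, let $\alpha^{BB1}=\dfrac{s^Ts}{s^Ty}$ and $\alpha^{BB2}=\dfrac{s^Ty}{y^Ty}$, and for $\gamma\in[0,1]$ let $\alpha=\gamma\alpha^{BB1}+(1-\gamma)\alpha^{BB2}$. Then there exists $\tau\in[0,1]$ such that $D=\alpha I$ is a solution of $$\min_{D=\beta I,\ \beta>0}\ \big\|\tau(D^{-1}s-y)+(1-\tau)(s-Dy)\big\| ,$$ where $I$ is the $n\times n$ identity matrix.
   Context: $\|\cdot\|$ is the Euclidean norm. In the paper, $s=s_{k-1}=x_k-x_{k-1}$ and $y=y_{k-1}=g_k-g_{k-1}$ are differences of consecutive iterates and gradients, and $\alpha^{BB1},\alpha^{BB2}$ are the long and short Barzilai–Borwein stepsizes. *)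

theory Defs
  imports "HOL-Analysis.Analysis"
begin

definition alpha_BB1 :: "real^'n \<Rightarrow> real^'n \<Rightarrow> real" where
  "alpha_BB1 s y = (s \<bullet> s) / (s \<bullet> y)"

definition alpha_BB2 :: "real^'n \<Rightarrow> real^'n \<Rightarrow> real" where
  "alpha_BB2 s y = (s \<bullet> y) / (y \<bullet> y)"

definition bb_obj :: "real \<Rightarrow> real^'n^'n \<Rightarrow> real^'n \<Rightarrow> real^'n \<Rightarrow> real" where
  "bb_obj \<tau> D s y = norm (\<tau> *\<^sub>R (matrix_inv D *v s - y) + (1 - \<tau>) *\<^sub>R (s - D *v y))"

end

theory Submission
  imports Defs
begin

text \<open>For \<open>D = x I\<close> the residual is \<open>(\<tau>/x + 1 - \<tau>) (s - x y)\<close>, so the squared objective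
  depends only on \<open>x\<close> and the Gram entries \<open>a = s\<bullet>s\<close>, \<open>b = s\<bullet>y\<close>, \<open>c = y\<bullet>y\<close>.  Its derivative
  in \<open>x\<close> has the sign of the cubic \<open>(1 - \<tau>) x\<^sup>2 (c x - b) - \<tau> (a - b x)\<close>, which is affine in \<open>\<tau>\<close>:
  at any \<open>\<alpha>\<close> between \<open>\<alpha>\<^sup>B\<^sup>B\<^sup>2 = b/c\<close> and \<open>\<alpha>\<^sup>B\<^sup>B\<^sup>1 = a/b\<close> it is nonnegative for \<open>\<tau> = 0\<close> and
  nonpositive for \<open>\<tau> = 1\<close>, so some \<open>\<tau> \<in> [0,1]\<close> makes \<open>\<alpha>\<close> stationary.  For that \<open>\<tau>\<close> the cubic
  is nondecreasing on \<open>[b/c, \<infinity>)\<close> and nonpositive on \<open>(0, b/c]\<close> (there both terms are \<open>\<le> 0\<close>,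
  because \<open>b/c \<le> a/b\<close> by Cauchy-Schwarz), so it changes sign only at \<open>\<alpha>\<close>, the global minimiser.\<close>

lemma matrix_inv_unique:
  fixes A :: "'a::semiring_1^'n^'m"
  assumes "A ** B = mat 1" and "B ** A = mat 1"
  shows "matrix_inv A = B"
proof -
  have "\<exists>A'. A ** A' = mat 1 \<and> A' ** A = mat 1"
    using assms by blast
  then have "A ** matrix_inv A = mat 1"
    unfolding matrix_inv_def by (rule someI2_ex) simp
  then show ?thesis
    using assms by (metis matrix_mul_assoc matrix_mul_lid)
qed

lemma matrix_inv_scaleR_mat_1:
  fixes k :: real
  assumes "k \<noteq> 0"
  shows "matrix_inv (k *\<^sub>R mat 1 :: real^'n^'n) = (1 / k) *\<^sub>R mat 1"
  using assms by (intro matrix_inv_unique) (simp_all add: matrix_scalar_ac flip: scalar_matrix_assoc)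

lemma DERIV_sign_change_imp_min:
  fixes f f' :: "real \<Rightarrow> real"
  assumes deriv: "\<And>x. l < x \<Longrightarrow> (f has_real_derivative f' x) (at x)"
    and nonpos: "\<And>x. l < x \<Longrightarrow> x \<le> m \<Longrightarrow> f' x \<le> 0"
    and nonneg: "\<And>x. m \<le> x \<Longrightarrow> 0 \<le> f' x"
    and "l < m" "l < x"
  shows "f m \<le> f x"
proof (cases "x \<le> m")
  case True
  show ?thesis
  proof (rule DERIV_nonpos_imp_nonincreasing [of x m f, OF True])
    fix z
    assume "x \<le> z" "z \<le> m"
    with \<open>l < x\<close> have "l < z"
      by linarith
    then show "\<exists>y. (f has_real_derivative y) (at z) \<and> y \<le> 0"
      using deriv nonpos \<open>z \<le> m\<close> by blast
  qed
next
  case False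
  show ?thesis
  proof (rule DERIV_nonneg_imp_nondecreasing [of m x f])
    show "m \<le> x"
      using False by simp
  next
    fix z
    assume "m \<le> z" "z \<le> x"
    with \<open>l < m\<close> have "l < z"
      by linarith
    then show "\<exists>y. (f has_real_derivative y) (at z) \<and> 0 \<le> y"
      using deriv nonneg \<open>m \<le> z\<close> by blast
  qed
qed

lemma alpha_BB2_le_alpha_BB1:
  assumes "s \<bullet> y > 0"
  shows "alpha_BB2 s y \<le> alpha_BB1 s y"
proof -
  have "y \<bullet> y > 0"
    using assms by auto
  moreover have "(s \<bullet> y)\<^sup>2 \<le> (s \<bullet> s) * (y \<bullet> y)"
    by (rule Cauchy_Schwarz_ineq)
  ultimately show ?thesis
    using assms by (simp add: alpha_BB1_def alpha_BB2_def divide_simps power2_eq_square mult.commute)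
qed

definition bb_residual :: "real \<Rightarrow> real \<Rightarrow> real \<Rightarrow> real \<Rightarrow> real \<Rightarrow> real" where
  "bb_residual \<tau> a b c x = (\<tau> / x + 1 - \<tau>)\<^sup>2 * (a - 2 * b * x + c * x\<^sup>2)"

definition bb_stationarity :: "real \<Rightarrow> real \<Rightarrow> real \<Rightarrow> real \<Rightarrow> real \<Rightarrow> real" where
  "bb_stationarity \<tau> a b c x = (1 - \<tau>) * x\<^sup>2 * (c * x - b) - \<tau> * (a - b * x)"

lemma bb_obj_scaleR_mat_1:
  fixes s y :: "real^'n"
  assumes "x \<noteq> 0"
  shows "bb_obj \<tau> (x *\<^sub>R mat 1) s y = sqrt (bb_residual \<tau> (s \<bullet> s) (s \<bullet> y) (y \<bullet> y) x)"
proof -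
  have residual: "\<tau> *\<^sub>R (matrix_inv (x *\<^sub>R mat 1) *v s - y) + (1 - \<tau>) *\<^sub>R (s - (x *\<^sub>R mat 1) *v y)
      = (\<tau> / x + 1 - \<tau>) *\<^sub>R (s - x *\<^sub>R y)"
    using assms
    by (simp add: matrix_inv_scaleR_mat_1 flip: scaleR_matrix_vector_assoc)
      (simp add: vec_eq_iff field_simps)
  have "(s - x *\<^sub>R y) \<bullet> (s - x *\<^sub>R y) = s \<bullet> s - 2 * (s \<bullet> y) * x + (y \<bullet> y) * x\<^sup>2"
    by (simp add: inner_diff_left inner_diff_right inner_commute power2_eq_square algebra_simps)
  then show ?thesis
    unfolding bb_obj_def residual norm_eq_sqrt_inner bb_residual_def
    by (simp add: power2_eq_square mult.assoc)
qed

lemma has_real_derivative_bb_residual: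
  assumes "x \<noteq> 0"
  shows "(bb_residual \<tau> a b c has_real_derivative
          2 * (\<tau> / x + 1 - \<tau>) / x\<^sup>2 * bb_stationarity \<tau> a b c x) (at x)"
  unfolding bb_residual_def [abs_def] using assms
  by (intro derivative_eq_intros refl) (auto, simp add: bb_stationarity_def power2_eq_square field_simps)

lemma bb_stationarity_mono:
  assumes "0 \<le> \<tau>" "\<tau> \<le> 1" "0 \<le> b" "0 \<le> c" "0 \<le> x" "b \<le> c * x" "x \<le> z"
  shows "bb_stationarity \<tau> a b c x \<le> bb_stationarity \<tau> a b c z"
proof -
  have "x\<^sup>2 * (c * x - b) \<le> z\<^sup>2 * (c * z - b)"
    using assms by (intro mult_mono power_mono) (auto intro: mult_left_mono)
  then have "(1 - \<tau>) * (x\<^sup>2 * (c * x - b)) \<le> (1 - \<tau>) * (z\<^sup>2 * (c * z - b))"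
    using assms by (intro mult_left_mono) auto
  moreover have "\<tau> * (b * x) \<le> \<tau> * (b * z)"
    using assms by (intro mult_left_mono) auto
  ultimately show ?thesis
    by (simp add: bb_stationarity_def algebra_simps)
qed

lemma bb_stationarity_nonpos:
  assumes "0 \<le> \<tau>" "\<tau> \<le> 1" "c * x \<le> b" "b * x \<le> a"
  shows "bb_stationarity \<tau> a b c x \<le> 0"
proof -
  have "(1 - \<tau>) * x\<^sup>2 * (c * x - b) \<le> 0"
    using assms by (intro mult_nonneg_nonpos) auto
  moreover have "0 \<le> \<tau> * (a - b * x)"
    using assms by simp
  ultimately show ?thesis
    by (simp add: bb_stationarity_def)
qed

lemma bb_stationarity_zero_exists:
  assumes "b \<le> c * \<alpha>" "b * \<alpha> \<le> a"
  obtains \<tau> where "0 \<le> \<tau>" "\<tau> \<le> 1" "bb_stationarity \<tau> a b c \<alpha> = 0"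
proof -
  define P where "P = \<alpha>\<^sup>2 * (c * \<alpha> - b)"
  define Q where "Q = a - b * \<alpha>"
  have "0 \<le> P" "0 \<le> Q"
    using assms by (simp_all add: P_def Q_def)
  have affine: "bb_stationarity \<tau> a b c \<alpha> = P - \<tau> * (P + Q)" for \<tau>
    by (simp add: bb_stationarity_def P_def Q_def algebra_simps)
  show ?thesis
  proof (cases "P + Q = 0")
    case True
    then show ?thesis
      using that[of 0] \<open>0 \<le> P\<close> \<open>0 \<le> Q\<close> by (simp add: affine)
  next
    case False
    then show ?thesis
      using that[of "P / (P + Q)"] \<open>0 \<le> P\<close> \<open>0 \<le> Q\<close> by (simp add: affine divide_simps)
  qed
qed

lemma bb_residual_stationary_point_le:
  assumes "0 \<le> \<tau>" "\<tau> \<le> 1" "0 \<le> b" "0 < c" "b\<^sup>2 \<le> a * c"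
    and "0 < \<alpha>" "b \<le> c * \<alpha>" "bb_stationarity \<tau> a b c \<alpha> = 0" "0 < x"
  shows "bb_residual \<tau> a b c \<alpha> \<le> bb_residual \<tau> a b c x"
proof -
  define weight where "weight z = 2 * (\<tau> / z + 1 - \<tau>) / z\<^sup>2" for z
  have weight_nonneg: "0 \<le> weight z" if "0 < z" for z
  proof -
    have "0 \<le> \<tau> / z + (1 - \<tau>)"
      using assms that by (intro add_nonneg_nonneg) auto
    then show ?thesis
      by (simp add: weight_def)
  qed
  have stationarity_nonpos: "bb_stationarity \<tau> a b c z \<le> 0" if "0 < z" "z \<le> \<alpha>" for z
  proof (cases "c * z \<le> b")
    case True
    have "b * z * c = b * (c * z)"
      by simp
    also have "\<dots> \<le> b\<^sup>2"
      using True assms by (simp add: mult_left_mono power2_eq_square)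
    also have "\<dots> \<le> a * c"
      using assms by simp
    finally have "b * z \<le> a"
      using assms by simp
    then show ?thesis
      using True assms by (intro bb_stationarity_nonpos) auto
  next
    case False
    then show ?thesis
      using assms that bb_stationarity_mono[of \<tau> b c z \<alpha> a] by auto
  qed
  have deriv: "(bb_residual \<tau> a b c has_real_derivative weight z * bb_stationarity \<tau> a b c z) (at z)"
    if "0 < z" for z
    using has_real_derivative_bb_residual[of z] that by (simp add: weight_def)
  have descent: "weight z * bb_stationarity \<tau> a b c z \<le> 0" if "0 < z" "z \<le> \<alpha>" for z
    using weight_nonneg[OF that(1)] stationarity_nonpos[OF that] by (rule mult_nonneg_nonpos)
  have ascent: "0 \<le> weight z * bb_stationarity \<tau> a b c z" if "\<alpha> \<le> z" for z
    using that assms weight_nonneg bb_stationarity_mono[of \<tau> b c \<alpha> z a] by simp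
  show ?thesis
    using DERIV_sign_change_imp_min[OF deriv descent ascent] assms by simp
qed

theorem theorem1:
  fixes s y :: "real^'n" and \<gamma> :: real
  assumes "s \<bullet> y > 0"
    and "0 \<le> \<gamma>" and "\<gamma> \<le> 1"
  shows "\<exists>\<tau>. 0 \<le> \<tau> \<and> \<tau> \<le> 1 \<and>
    (let \<alpha> = \<gamma> * alpha_BB1 s y + (1 - \<gamma>) * alpha_BB2 s y in
      \<alpha> > 0 \<and>
      (\<forall>\<beta>::real. \<beta> > 0 \<longrightarrow>
         bb_obj \<tau> (\<alpha> *\<^sub>R mat 1) s y \<le> bb_obj \<tau> (\<beta> *\<^sub>R mat 1) s y))"
proof -
  define \<alpha> where "\<alpha> = \<gamma> * alpha_BB1 s y + (1 - \<gamma>) * alpha_BB2 s y"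
  have "y \<bullet> y > 0"
    using assms by auto
  have "\<gamma> * alpha_BB2 s y \<le> \<gamma> * alpha_BB1 s y" "(1 - \<gamma>) * alpha_BB2 s y \<le> (1 - \<gamma>) * alpha_BB1 s y"
    using alpha_BB2_le_alpha_BB1[OF assms(1)] assms(2,3) by (simp_all add: mult_left_mono)
  then have "alpha_BB2 s y \<le> \<alpha>" "\<alpha> \<le> alpha_BB1 s y"
    unfolding \<alpha>_def left_diff_distrib by linarith+
  then have lower: "s \<bullet> y \<le> (y \<bullet> y) * \<alpha>" and upper: "(s \<bullet> y) * \<alpha> \<le> s \<bullet> s"
    using assms(1) \<open>y \<bullet> y > 0\<close> by (simp_all add: alpha_BB1_def alpha_BB2_def field_simps)
  have "\<alpha> > 0"
    using zero_less_mult_pos[of "y \<bullet> y" \<alpha>] lower assms(1) \<open>y \<bullet> y > 0\<close> by linarith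
  obtain \<tau> where \<tau>: "0 \<le> \<tau>" "\<tau> \<le> 1" "bb_stationarity \<tau> (s \<bullet> s) (s \<bullet> y) (y \<bullet> y) \<alpha> = 0"
    by (rule bb_stationarity_zero_exists[OF lower upper])
  have "bb_residual \<tau> (s \<bullet> s) (s \<bullet> y) (y \<bullet> y) \<alpha> \<le> bb_residual \<tau> (s \<bullet> s) (s \<bullet> y) (y \<bullet> y) \<beta>"
    if "\<beta> > 0" for \<beta>
    using bb_residual_stationary_point_le
        [OF \<tau>(1,2) _ \<open>y \<bullet> y > 0\<close> Cauchy_Schwarz_ineq \<open>\<alpha> > 0\<close> lower \<tau>(3) that] assms(1)
    by simp
  then have "bb_obj \<tau> (\<alpha> *\<^sub>R mat 1) s y \<le> bb_obj \<tau> (\<beta> *\<^sub>R mat 1) s y" if "\<beta> > 0" for \<beta>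
    using \<open>\<alpha> > 0\<close> that by (simp add: bb_obj_scaleR_mat_1)
  then show ?thesis
    unfolding Let_def \<alpha>_def [symmetric] using \<tau> \<open>\<alpha> > 0\<close> by blast
qed

end
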